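(* Let $f(z)=z+\sum_{k=2}^\infty b_kz^k\in\mathscr{S}^*_\wp$ and $\alpha=(1+e)^2$. Then $\sum_{k=2}^\infty (k^2-\alpha)|b_k|^2\le\alpha-1$. Consequently, if $f(z)=z+\sum_{k\ge4}b_kz^k\in\mathscr{S}^*_\wp$, then $|b_k|\le\sqrt{(\alpha-1)/(k^2-\alpha)}$ for all $k\ge4$.
   Context: $\mathbb{D}$ is the unit disk; $\mathcal{A}$ is the class of analytic $f$ on $\mathbb{D}$ with $f(0)=0,f'(0)=1$. $f\prec g$ means $f=g\circ\omega$ for analytic $\omega:\mathbb{D}\to\mathbb{D}$, $\omega(0)=0$. $\wp(z)=1+ze^z$, $\mathscr{S}^*_\wp=\{f\in\mathcal{A}:zf'(z)/f(z)\prec\wp(z)\}$. *)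

theory Defs
  imports "HOL-Analysis.Analysis"
begin

definition subordinate :: "(complex \<Rightarrow> complex) \<Rightarrow> (complex \<Rightarrow> complex) \<Rightarrow> bool" where
  "subordinate f g \<longleftrightarrow> (\<exists>\<omega>. \<omega> holomorphic_on ball 0 1 \<and> \<omega> 0 = 0 \<and>
      (\<forall>z\<in>ball 0 1. \<omega> z \<in> ball 0 1) \<and> (\<forall>z\<in>ball 0 1. f z = g (\<omega> z)))"

definition wp :: "complex \<Rightarrow> complex" where
  "wp z = 1 + z * exp z"

definition classA :: "(complex \<Rightarrow> complex) \<Rightarrow> bool" where
  "classA f \<longleftrightarrow> f holomorphic_on ball 0 1 \<and> f 0 = 0 \<and> deriv f 0 = 1"

text \<open>The function z f'(z)/f(z), with its removable value 1 at z = 0.\<close>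
definition starquot :: "(complex \<Rightarrow> complex) \<Rightarrow> complex \<Rightarrow> complex" where
  "starquot f z = (if z = 0 then 1 else z * deriv f z / f z)"

text \<open>The class S*_wp; f(z) \<noteq> 0 on D \ {0} is needed for zf'/f to be analytic.\<close>
definition starlike_wp :: "(complex \<Rightarrow> complex) \<Rightarrow> bool" where
  "starlike_wp f \<longleftrightarrow> classA f \<and> (\<forall>z\<in>ball 0 1. z \<noteq> 0 \<longrightarrow> f z \<noteq> 0) \<and>
     subordinate (starquot f) wp"

definition coef :: "(complex \<Rightarrow> complex) \<Rightarrow> nat \<Rightarrow> complex" where
  "coef f k = (deriv ^^ k) f 0 / fact k"

end

theory Submission
  imports Defs "HOL-Complex_Analysis.Complex_Analysis"
begin

text \<open>
  On the circle |z| = r < 1 the subordination zf'/f \<prec> \<wp> gives |zf'(z)| \<le> (1+e)|f(z)|, since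
  |\<wp>(w)| \<le> 1 + |w| e^{Re w} < 1 + e on the disk. Squaring and integrating over the circle,
  Parseval's identity turns this into \<Sum> (k^2 - \<alpha>) |b_k|^2 r^(2k) \<le> 0 (with b_1 = 1). The terms
  with k \<ge> 4 are nonnegative because \<alpha> < 16, so the finite partial sums stay \<le> 0 as r \<rightarrow> 1;
  hence the whole series converges with sum \<le> 0, and moving the term k = 1 to the right gives
  the bound \<alpha> - 1. If b_2 = b_3 = 0 every remaining term is nonnegative and bounded by the sum.
\<close>

lemma cis_of_int_has_integral:
  fixes m :: int
  shows "((\<lambda>t. cis (of_int m * t)) has_integral (if m = 0 then 2*pi else 0)) {0..2*pi}"
proof (cases "m = 0")
  case True
  then show ?thesis
    using has_integral_const_real[of "1::complex" 0 "2*pi"] by (simp add: scaleR_conv_of_real)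
next
  case False
  define F where "F = (\<lambda>z::complex. exp (\<i> * of_int m * z) / (\<i> * of_int m))"
  have "((\<lambda>x. F (of_real x)) has_vector_derivative cis (of_int m * t)) (at t within {0..2*pi})" for t
  proof (rule has_vector_derivative_real_field)
    show "(F has_field_derivative cis (of_int m * t)) (at (of_real t))"
      unfolding F_def using False
      by (auto intro!: derivative_eq_intros simp: cis_conv_exp field_simps)
  qed
  then have "((\<lambda>t. cis (of_int m * t)) has_integral (F (of_real (2*pi)) - F (of_real 0))) {0..2*pi}"
    by (intro fundamental_theorem_of_calculus) auto
  moreover have "exp (\<i> * of_int m * of_real (2*pi)) = 1"
    using exp_integer_2pi[of "of_int m"] by (simp add: mult_ac)
  ultimately show ?thesis
    using False by (simp add: F_def scaleR_conv_of_real)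
qed

lemma norm_sum_power_cis_squared:
  fixes c :: "nat \<Rightarrow> complex" and r t :: real
  shows "complex_of_real ((cmod (\<Sum>k<N. c k * (of_real r * cis t)^k))^2)
       = (\<Sum>k<N. \<Sum>l<N. c k * cnj (c l) * of_real (r^(k+l)) * cis (of_int (int k - int l) * t))"
proof -
  have "complex_of_real ((cmod (\<Sum>k<N. c k * (of_real r * cis t)^k))^2)
      = (\<Sum>k<N. c k * (of_real r * cis t)^k) * cnj (\<Sum>l<N. c l * (of_real r * cis t)^l)"
    by (rule complex_norm_square)
  also have "\<dots> = (\<Sum>k<N. \<Sum>l<N. (c k * (of_real r * cis t)^k) * cnj (c l * (of_real r * cis t)^l))"
    by (simp add: sum_product cnj_sum)
  also have "\<dots> = (\<Sum>k<N. \<Sum>l<N. c k * cnj (c l) * of_real (r^(k+l)) * cis (of_int (int k - int l) * t))"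
  proof (intro sum.cong refl)
    fix k l
    have "(c k * (of_real r * cis t)^k) * cnj (c l * (of_real r * cis t)^l)
        = c k * cnj (c l) * of_real (r^(k+l)) * (cis (real k * t) * cis (- (real l * t)))"
      by (simp add: power_mult_distrib power_add Complex.DeMoivre cis_cnj mult_ac)
    then show "(c k * (of_real r * cis t)^k) * cnj (c l * (of_real r * cis t)^l)
        = c k * cnj (c l) * of_real (r^(k+l)) * cis (of_int (int k - int l) * t)"
      by (simp add: cis_mult algebra_simps)
  qed
  finally show ?thesis .
qed

lemma parseval_polynomial:
  fixes c :: "nat \<Rightarrow> complex" and r :: real
  shows "((\<lambda>t. (cmod (\<Sum>k<N. c k * (of_real r * cis t)^k))^2) has_integral
           2*pi*(\<Sum>k<N. (cmod (c k))^2 * r^(2*k))) {0..2*pi}"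
proof -
  define a where "a = (\<lambda>k l. c k * cnj (c l) * of_real (r^(k+l)))"
  have "((\<lambda>t. \<Sum>k<N. \<Sum>l<N. a k l * cis (of_int (int k - int l) * t)) has_integral
        (\<Sum>k<N. \<Sum>l<N. a k l * of_real (if int k - int l = 0 then 2*pi else 0))) {0..2*pi}"
    by (intro has_integral_sum finite_lessThan has_integral_mult_right cis_of_int_has_integral)
  also have "(\<Sum>k<N. \<Sum>l<N. a k l * of_real (if int k - int l = 0 then 2*pi else 0))
      = (\<Sum>k<N. a k k * of_real (2*pi))"
  proof (rule sum.cong[OF refl])
    fix k assume k: "k \<in> {..<N}"
    have "(\<Sum>l<N. a k l * of_real (if int k - int l = 0 then 2*pi else 0))
        = (\<Sum>l<N. if l = k then a k l * of_real (2*pi) else 0)"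
      by (intro sum.cong refl) auto
    then show "(\<Sum>l<N. a k l * of_real (if int k - int l = 0 then 2*pi else 0)) = a k k * of_real (2*pi)"
      using k by (simp add: sum.delta')
  qed
  also have "\<dots> = of_real (2*pi*(\<Sum>k<N. (cmod (c k))^2 * r^(2*k)))"
  proof -
    have "a k k = of_real ((cmod (c k))^2 * r^(2*k))" for k
      by (simp add: a_def mult_2 flip: complex_norm_square)
    then show ?thesis by (simp add: sum_distrib_left mult_ac)
  qed
  finally have "((\<lambda>t. complex_of_real ((cmod (\<Sum>k<N. c k * (of_real r * cis t)^k))^2)) has_integral
        of_real (2*pi*(\<Sum>k<N. (cmod (c k))^2 * r^(2*k)))) {0..2*pi}"
    unfolding norm_sum_power_cis_squared a_def .
  from has_integral_linear[OF this bounded_linear_Re] show ?thesis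
    by (simp add: o_def)
qed

lemma parseval_power_series:
  fixes c :: "nat \<Rightarrow> complex" and r :: real
  assumes "0 \<le> r" and "ereal r < conv_radius c"
  defines "g \<equiv> \<lambda>t. (cmod (\<Sum>k. c k * (of_real r * cis t)^k))^2"
  shows "(\<lambda>k. (cmod (c k))^2 * r^(2*k)) sums (integral {0..2*pi} g / (2*pi))"
    and "g integrable_on {0..2*pi}"
proof -
  define p where "p = (\<lambda>n t. \<Sum>i<n. c i * (of_real r * cis t)^i)"
  define h where "h = (\<lambda>t. \<Sum>i. c i * (of_real r * cis t)^i)"
  have "uniform_limit (cball 0 r) (\<lambda>n x. \<Sum>i<n. c i * (x - 0)^i)
          (\<lambda>x. \<Sum>i. c i * (x - 0)^i) sequentially"
    by (rule powser_uniform_limit) (use assms in auto)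
  moreover have "(\<lambda>t. of_real r * cis t) \<in> {0..2*pi} \<rightarrow> cball 0 r"
    using assms by (auto simp: norm_mult)
  ultimately have "uniform_limit {0..2*pi} p h sequentially"
    unfolding p_def h_def by (auto dest: uniform_limit_compose')
  then have lim_norm: "uniform_limit {0..2*pi} (\<lambda>n t. norm (p n t)) (\<lambda>t. norm (h t)) sequentially"
    by (rule uniform_limit_norm)
  have cont: "continuous_on {0..2*pi} (p n)" for n
    unfolding p_def by (intro continuous_intros)
  have "bounded ((\<lambda>t. norm (p n t)) ` {0..2*pi})" for n
    by (intro compact_imp_bounded compact_continuous_image continuous_intros cont) simp
  then have "bounded ((\<lambda>t. norm (h t)) ` {0..2*pi})"
    by (intro uniform_limit_bounded[OF lim_norm]) auto
  with lim_norm have lim_sq: "uniform_limit {0..2*pi} (\<lambda>n t. norm (p n t) * norm (p n t))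
                        (\<lambda>t. norm (h t) * norm (h t)) sequentially"
    by (intro uniform_lim_mult)
  have cont_sq: "continuous_on {0..2*pi} (\<lambda>t. norm (p n t) * norm (p n t))" for n
    using cont by (intro continuous_intros)
  obtain I J
    where I: "\<And>n. ((\<lambda>t. norm (p n t) * norm (p n t)) has_integral I n) {0..2*pi}"
      and J: "((\<lambda>t. norm (h t) * norm (h t)) has_integral J) {0..2*pi}"
      and lim_I: "I \<longlonglongrightarrow> J"
    using uniform_limit_integral[OF lim_sq cont_sq] by auto
  have I_eq: "I n = 2*pi*(\<Sum>k<n. (cmod (c k))^2 * r^(2*k))" for n
    using has_integral_unique[OF I[of n]] parseval_polynomial[of c r n]
    by (simp add: p_def power2_eq_square)
  have "(\<lambda>n. (\<Sum>k<n. (cmod (c k))^2 * r^(2*k))) \<longlonglongrightarrow> J / (2*pi)"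
    using tendsto_divide[OF lim_I tendsto_const, of "2*pi"] by (simp add: I_eq)
  moreover have "J = integral {0..2*pi} g"
    using J by (simp add: g_def h_def power2_eq_square integral_unique)
  ultimately show "(\<lambda>k. (cmod (c k))^2 * r^(2*k)) sums (integral {0..2*pi} g / (2*pi))"
    by (simp add: sums_def)
  show "g integrable_on {0..2*pi}"
    using J by (simp add: g_def h_def power2_eq_square has_integral_integrable)
qed

lemma holomorphic_coef_sums:
  assumes "f holomorphic_on ball 0 1" and "z \<in> ball 0 1"
  shows "(\<lambda>k. coef f k * z^k) sums f z"
  using holomorphic_power_series[OF assms] by (simp add: coef_def)

lemma holomorphic_coef_deriv_sums:
  assumes hol: "f holomorphic_on ball 0 1" and z: "z \<in> ball 0 1"
  shows "(\<lambda>k. (of_nat k * coef f k) * z^k) sums (z * deriv f z)"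
proof -
  have "deriv f holomorphic_on ball 0 1"
    by (rule holomorphic_deriv[OF hol open_ball])
  from sums_mult[OF holomorphic_power_series[OF this z], of z]
  have "(\<lambda>n. z * ((deriv ^^ n) (deriv f) 0 / fact n * (z - 0)^n)) sums (z * deriv f z)" .
  moreover have "z * ((deriv ^^ n) (deriv f) 0 / fact n * (z - 0)^n)
      = (of_nat (Suc n) * coef f (Suc n)) * z^(Suc n)" for n
  proof -
    have "(deriv ^^ n) (deriv f) = (deriv ^^ Suc n) f"
      by (simp only: funpow_Suc_right o_apply)
    moreover have "(fact (Suc n) :: complex) = of_nat (Suc n) * fact n" by simp
    moreover have "(of_nat (Suc n) :: complex) \<noteq> 0"
      by (metis of_nat_eq_0_iff nat.distinct(1))
    ultimately show ?thesis
      unfolding coef_def by (simp del: of_nat_Suc fact_Suc add: field_simps)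
  qed
  ultimately have "(\<lambda>n. (of_nat (Suc n) * coef f (Suc n)) * z^(Suc n)) sums (z * deriv f z)"
    by simp
  then show ?thesis
    by (subst (asm) sums_Suc_iff) simp
qed

lemma norm_wp_le:
  assumes "cmod w < 1"
  shows "cmod (wp w) \<le> 1 + exp 1"
proof -
  have "cmod (wp w) \<le> 1 + cmod w * exp (Re w)"
    unfolding wp_def using norm_triangle_ineq[of 1 "w * exp w"] by (simp add: norm_mult)
  also have "cmod w * exp (Re w) \<le> 1 * exp 1"
    using assms abs_Re_le_cmod[of w] by (intro mult_mono) auto
  finally show ?thesis by simp
qed

lemma starlike_wp_norm_deriv_le:
  assumes "starlike_wp f" and z: "z \<in> ball 0 1"
  shows "cmod (z * deriv f z) \<le> (1 + exp 1) * cmod (f z)"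
proof (cases "z = 0")
  case False
  from assms obtain \<omega> where \<omega>: "\<omega> z \<in> ball 0 1" and "starquot f z = wp (\<omega> z)"
    and "f z \<noteq> 0"
    using z False unfolding starlike_wp_def subordinate_def by blast
  with False have "z * deriv f z = wp (\<omega> z) * f z"
    by (simp add: starquot_def field_simps)
  moreover have "cmod (wp (\<omega> z)) \<le> 1 + exp 1"
    using \<omega> by (intro norm_wp_le) auto
  ultimately show ?thesis
    by (simp add: norm_mult mult_right_mono)
qed simp

lemma coef_weighted_sum_nonpos_if_norm_deriv_le:
  fixes f :: "complex \<Rightarrow> complex" and C r :: real
  assumes hol: "f holomorphic_on ball 0 1"
    and deriv_le: "\<And>z. z \<in> ball 0 1 \<Longrightarrow> cmod (z * deriv f z) \<le> C * cmod (f z)"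
    and r: "0 \<le> r" "r < 1"
  shows "summable (\<lambda>k. ((real k)^2 - C^2) * (cmod (coef f k))^2 * r^(2*k))"
    and "(\<Sum>k. ((real k)^2 - C^2) * (cmod (coef f k))^2 * r^(2*k)) \<le> 0"
proof -
  define b where "b = (\<lambda>k. of_nat k * coef f k)"
  have conv_radius_gt: "ereal r < conv_radius c"
    if "\<And>z. z \<in> ball 0 1 \<Longrightarrow> summable (\<lambda>k. c k * z^k)" for c :: "nat \<Rightarrow> complex"
  proof -
    have "1 \<le> conv_radius c"
      by (rule conv_radius_geI_ex') (auto intro: that)
    then show ?thesis
      using r by (meson ereal_less(3) order_less_le_trans)
  qed
  define z where "z = (\<lambda>t. of_real r * cis t)"
  have z: "z t \<in> ball 0 1" for t
    using r by (simp add: z_def norm_mult)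
  define F where "F = (\<lambda>t. (cmod (f (z t)))^2)"
  define G where "G = (\<lambda>t. (cmod (z t * deriv f (z t)))^2)"
  have F: "(\<lambda>k. (cmod (coef f k))^2 * r^(2*k)) sums (integral {0..2*pi} F / (2*pi))"
    "F integrable_on {0..2*pi}"
    using parseval_power_series[OF r(1) conv_radius_gt, of "coef f"]
      holomorphic_coef_sums[OF hol] z sums_summable
    by (auto simp: F_def z_def sums_iff)
  have G: "(\<lambda>k. (cmod (b k))^2 * r^(2*k)) sums (integral {0..2*pi} G / (2*pi))"
    "G integrable_on {0..2*pi}"
    using parseval_power_series[OF r(1) conv_radius_gt, of b]
      holomorphic_coef_deriv_sums[OF hol] z sums_summable
    by (auto simp: G_def z_def b_def sums_iff)
  have "integral {0..2*pi} G \<le> integral {0..2*pi} (\<lambda>t. C^2 * F t)"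
  proof (rule integral_le[OF G(2)])
    show "(\<lambda>t. C^2 * F t) integrable_on {0..2*pi}"
      using integrable_on_cmult_left[OF F(2)] by simp
    fix t
    have "cmod (z t * deriv f (z t)) \<le> C * cmod (f (z t))"
      using deriv_le z by blast
    then show "G t \<le> C^2 * F t"
      unfolding G_def F_def by (simp add: power_mult_distrib[symmetric] power_mono)
  qed
  then have "integral {0..2*pi} G / (2*pi) - C^2 * (integral {0..2*pi} F / (2*pi)) \<le> 0"
    by (simp add: divide_right_mono)
  moreover have "(\<lambda>k. ((real k)^2 - C^2) * (cmod (coef f k))^2 * r^(2*k)) sums
      (integral {0..2*pi} G / (2*pi) - C^2 * (integral {0..2*pi} F / (2*pi)))"
    using sums_diff[OF G(1) sums_mult[OF F(1), of "C^2"]]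
    by (simp add: b_def norm_mult power_mult_distrib algebra_simps)
  ultimately show "summable (\<lambda>k. ((real k)^2 - C^2) * (cmod (coef f k))^2 * r^(2*k))"
    and "(\<Sum>k. ((real k)^2 - C^2) * (cmod (coef f k))^2 * r^(2*k)) \<le> 0"
    by (auto simp: sums_iff)
qed

lemma suminf_nonpos_if_power_series_nonpos:
  fixes d :: "nat \<Rightarrow> real"
  assumes power_series: "\<And>r. 0 < r \<Longrightarrow> r < 1 \<Longrightarrow> summable (\<lambda>k. d k * r^k) \<and> (\<Sum>k. d k * r^k) \<le> 0"
    and nonneg: "\<And>k. K \<le> k \<Longrightarrow> 0 \<le> d k"
  shows "summable d" and "suminf d \<le> 0"
proof -
  have partial: "(\<Sum>k<N. d k) \<le> 0" if "K \<le> N" for N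
  proof -
    have "((\<lambda>r. \<Sum>k<N. d k * r^k) \<longlongrightarrow> (\<Sum>k<N. d k * 1^k)) (at_left 1)"
      by (intro tendsto_intros)
    moreover have "eventually (\<lambda>r. r \<in> {0<..<1}) (at_left (1::real))"
      by (rule eventually_at_left_real) simp
    then have "eventually (\<lambda>r. (\<Sum>k<N. d k * r^k) \<le> 0) (at_left 1)"
    proof eventually_elim
      case (elim r)
      with power_series have "summable (\<lambda>k. d k * r^k)" and "(\<Sum>k. d k * r^k) \<le> 0"
        by auto
      moreover have "(\<Sum>k<N. d k * r^k) \<le> (\<Sum>k. d k * r^k)"
        using elim that nonneg by (intro sum_le_suminf[OF \<open>summable _\<close>]) auto
      ultimately show ?case by linarith
    qed
    ultimately show ?thesis
      by (simp add: tendsto_upperbound)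
  qed
  have "summable (\<lambda>n. d (n + K))"
  proof (rule summableI_nonneg_bounded)
    fix M
    have "(\<Sum>k<M+K. d k) = (\<Sum>k<K. d k) + (\<Sum>n<M. d (n + K))"
      by (induction M) simp_all
    with partial[of "M+K"] show "(\<Sum>n<M. d (n + K)) \<le> - (\<Sum>k<K. d k)"
      by simp
  qed (simp add: nonneg)
  then show "summable d" by simp
  then show "suminf d \<le> 0"
    using LIMSEQ_le_const2[OF summable_LIMSEQ] partial by blast
qed

lemma one_plus_exp1_squared_less_16: "(1 + exp 1)^2 < (16::real)"
proof -
  have "exp (1::real) < 3" using e_less_272 by simp
  then show ?thesis
    using power_strict_mono[of "1 + exp (1::real)" 4 2] by simp
qed

theorem mainTheorem13:
  fixes f :: "complex \<Rightarrow> complex" and \<alpha> :: real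
  assumes "starlike_wp f"
    and "\<alpha> = (1 + exp 1)\<^sup>2"
  shows "summable (\<lambda>n. (real (n+2) ^ 2 - \<alpha>) * (cmod (coef f (n+2)))\<^sup>2)
       \<and> (\<Sum>n. (real (n+2) ^ 2 - \<alpha>) * (cmod (coef f (n+2)))\<^sup>2) \<le> \<alpha> - 1
       \<and> (coef f 2 = 0 \<and> coef f 3 = 0 \<longrightarrow>
            (\<forall>k\<ge>4. cmod (coef f k) \<le> sqrt ((\<alpha> - 1) / (real k ^ 2 - \<alpha>))))"
proof -
  have hol: "f holomorphic_on ball 0 1" and "coef f 0 = 0" and "coef f 1 = 1"
    using assms(1) by (simp_all add: starlike_wp_def classA_def coef_def)
  define d where "d k = ((real k)^2 - \<alpha>) * (cmod (coef f k))^2" for k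
  have weight_pos: "0 < (real k)^2 - \<alpha>" if "4 \<le> k" for k
    using one_plus_exp1_squared_less_16 power_mono[of 4 "real k" 2] that
    by (simp add: assms(2))
  have d_nonneg: "0 \<le> d k" if "4 \<le> k" for k
    using weight_pos[OF that] by (simp add: d_def)
  have "summable (\<lambda>k. d k * \<rho>^k) \<and> (\<Sum>k. d k * \<rho>^k) \<le> 0" if "0 < \<rho>" "\<rho> < 1" for \<rho>
    using coef_weighted_sum_nonpos_if_norm_deriv_le[OF hol starlike_wp_norm_deriv_le[OF assms(1)],
        of "sqrt \<rho>"] that
    by (simp add: d_def assms(2) power_mult mult.assoc)
  then have "summable d" and "suminf d \<le> 0"
    using suminf_nonpos_if_power_series_nonpos[of d 4] d_nonneg by auto
  moreover have "(\<Sum>k<2. d k) = 1 - \<alpha>"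
    using \<open>coef f 0 = 0\<close> \<open>coef f 1 = 1\<close> by (simp add: d_def numeral_2_eq_2)
  ultimately have tail: "summable (\<lambda>n. d (n+2))" "(\<Sum>n. d (n+2)) \<le> \<alpha> - 1"
    using suminf_minus_initial_segment[of d 2] summable_iff_shift[of d 2] by simp_all
  moreover have "cmod (coef f k) \<le> sqrt ((\<alpha> - 1) / (real k ^ 2 - \<alpha>))"
    if "coef f 2 = 0" "coef f 3 = 0" "4 \<le> k" for k
  proof -
    have tail_nonneg: "0 \<le> d (n+2)" for n
    proof -
      consider "n = 0" | "n = 1" | "2 \<le> n" by linarith
      then show ?thesis
        using that(1,2) d_nonneg[of "n+2"] by cases (simp_all add: d_def eval_nat_numeral)
    qed
    have "d k = d ((k - 2) + 2)"
      using \<open>4 \<le> k\<close> by (intro arg_cong[where f = d]) linarith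
    also have "\<dots> \<le> (\<Sum>n. d (n+2))"
      using sum_le_suminf[OF tail(1), of "{k-2}"] tail_nonneg by simp
    finally have "d k \<le> \<alpha> - 1"
      using tail(2) by simp
    with weight_pos[OF that(3)] show ?thesis
      by (intro real_le_rsqrt) (simp add: d_def pos_le_divide_eq mult.commute)
  qed
  ultimately show ?thesis
    by (simp add: d_def)
qed

end
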